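(* Let $\mathbb G$ be a cyclic group (i.e., $\mathbb Z_n$ for some $n\ge1$, or $\mathbb Z$) with generator $1$, let $(\mathbf A,\mathbf A')$ be a promise template and $k\ge1$. The $\mathbb G$-affine $k$-consistency relaxation solves $\mathrm{PCSP}(\mathbf A,\mathbf A')$ if and only if the $k$-consistency reduction $\kappa_k^{\mathbf A,\mathbf G}$ is a reduction from $\mathrm{PCSP}(\mathbf A,\mathbf A')$ to $\mathrm{CSP}(\mathbf G)$.
   Context: Structures. A (multisorted relational) signature consists of types and relation symbols, each symbol $R$ having an arity $\mathrm{ar}_R$, a tuple of types. A structure $\mathbf A$ consists of a set $A_t$ per type and relations $R^{\mathbf A}\subseteq A_{\mathrm{ar}_R(1)}\times\dots\times A_{\mathrm{ar}_R(k)}$. A homomorphism is a type-preserving family of maps preserving all relations; write $\mathbf A\to\mathbf B$. For a finite set $F$, $\mathbf B^F$ has domains $B_t^F$ and $(b_1,\dots,b_m)\in R^{\mathbf B^F}$ iff $(b_1(i),\dots,b_m(i))\in R^{\mathbf B}$ for all $i\in F$. Promise CSP. A promise template is a pair $(\mathbf A,\mathbf A')$ of structures of the same signature, $\mathbf A$ finite, $\mathbf A\to\mathbf A'$. $\mathrm{PCSP}(\mathbf A,\mathbf A')$: given finite $\mathbf X$, answer yes if $\mathbf X\to\mathbf A$, no if $\mathbf X\not\to\mathbf A'$; $\mathrm{CSP}(\mathbf B)=\mathrm{PCSP}(\mathbf B,\mathbf B)$. A map $\psi$ is a reduction from $\mathrm{PCSP}(\mathbf A,\mathbf A')$ to $\mathrm{PCSP}(\mathbf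 B,\mathbf B')$ if $\mathbf X\to\mathbf A\Rightarrow\psi(\mathbf X)\to\mathbf B$ and $\psi(\mathbf X)\to\mathbf B'\Rightarrow\mathbf X\to\mathbf A'$. Group template. For an Abelian group $\mathbb G$, $\mathbf G$ is the single-sorted structure with domain $G$, the ternary relation $\{(x_1,x_2,y)\mid x_1+x_2=y\}$, and a unary relation $\{b\}$ for each $b\in G$. $k$-consistency. For $\mathbf X$ and a set $K$ of at most $k$ elements of $\mathbf X$, a partial homomorphism $K\to\mathbf A$ is a type-preserving $f\colon K\to A$ with $(f(v_1),\dots,f(v_m))\in R^{\mathbf A}$ for every $(v_1,\dots,v_m)\in R^{\mathbf X}$ with all $v_i\in K$. Enforcing $k$-consistency: (1) let $\mathcal F_K$ be the set of partial homomorphisms $K\to\mathbf A$ for each $|K|\le k$; (2) for each $L\subset K$ remove from $\mathcal F_L$ elements not extending to some $g\in\mathcal F_K$ and from $\mathcal F_K$ every $g$ with $g|_L\notin\mathcal F_L$; (3) repeat (2) until stable. The $k$-consistency reduction $\kappa_k^{\mathbf A,\mathbf B}(\mathbf X)$ continues: (4) for each $K$ take a copy of $\mathbf B^{\mathcal F_K}$ with elements $(K;b)$; (5) for $L\subseteq K$ identify $(K;b\circ\rho_{K,L})$ with $(L;b)$ where $\rho_{K,L}(g)=g|_L$; output the quotient by the generated equivalence relation, relations being images. $\mathbb G$-affine $k$-consistency relaxation. Given $\mathbf X$, compute the final sets $\mathcal F_K$ from steps (1)–(3), and form the system of equations over $\mathbb G$ with variables $x_{K,f}\in G$ ($|K|\le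 k$, $f\in\mathcal F_K$): $\sum_{f\in\mathcal F_K}x_{K,f}=1$ for each $K$, and $\sum_{f\in\mathcal F_K,f|_L=g}x_{K,f}=x_{L,g}$ for each $L\subset K$, $g\in\mathcal F_L$. The relaxation accepts iff the system has a solution; it solves $\mathrm{PCSP}(\mathbf A,\mathbf A')$ if it rejects every $\mathbf X$ with $\mathbf X\not\to\mathbf A'$ (it always accepts when $\mathbf X\to\mathbf A$). *)

theory Defs
  imports Main "HOL-Library.FuncSet"
begin

text \<open>A signature is given by a type of sorts 't, a type of relation symbols 'r
  and an arity function ar :: 'r => 't list.  A structure has a domain per sort and
  a relation (set of tuples, as lists) per symbol.\<close>

record ('t, 'r, 'a) struc =
  sdom :: "'t \<Rightarrow> 'a set"
  srel :: "'r \<Rightarrow> 'a list set"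

definition wf_struc :: "('r \<Rightarrow> 't list) \<Rightarrow> ('t, 'r, 'a) struc \<Rightarrow> bool" where
  "wf_struc ar S \<longleftrightarrow>
     (\<forall>R. \<forall>xs \<in> srel S R. length xs = length (ar R) \<and>
                          (\<forall>i < length xs. xs ! i \<in> sdom S (ar R ! i)))"

definition elems :: "('t, 'r, 'a) struc \<Rightarrow> ('t \<times> 'a) set" where
  "elems S = Sigma UNIV (sdom S)"

definition finite_struc :: "('t, 'r, 'a) struc \<Rightarrow> bool" where
  "finite_struc S \<longleftrightarrow> finite (elems S)"

definition is_hom :: "'r set \<Rightarrow> ('r \<Rightarrow> 't list) \<Rightarrow> ('t, 'r, 'a) struc \<Rightarrow> ('t, 'r, 'b) struc
                      \<Rightarrow> ('t \<Rightarrow> 'a \<Rightarrow> 'b) \<Rightarrow> bool" where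
  "is_hom Sig ar S T h \<longleftrightarrow>
     (\<forall>t. \<forall>x \<in> sdom S t. h t x \<in> sdom T t) \<and>
     (\<forall>R \<in> Sig. \<forall>xs \<in> srel S R. map (\<lambda>i. h (ar R ! i) (xs ! i)) [0..<length xs] \<in> srel T R)"

definition homto :: "'r set \<Rightarrow> ('r \<Rightarrow> 't list) \<Rightarrow> ('t, 'r, 'a) struc \<Rightarrow> ('t, 'r, 'b) struc \<Rightarrow> bool" where
  "homto Sig ar S T \<longleftrightarrow> (\<exists>h. is_hom Sig ar S T h)"

definition promise_template :: "('r \<Rightarrow> 't list) \<Rightarrow> ('t, 'r, 'a) struc \<Rightarrow> ('t, 'r, 'b) struc \<Rightarrow> bool" where
  "promise_template ar A A' \<longleftrightarrow>
     wf_struc ar A \<and> wf_struc ar A' \<and> finite_struc A \<and> homto UNIV ar A A'"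

text \<open>Partial homomorphisms K -> A, as extensional functions on K.\<close>
definition is_phom :: "('r \<Rightarrow> 't list) \<Rightarrow> ('t, 'r, 'x) struc \<Rightarrow> ('t, 'r, 'a) struc
                       \<Rightarrow> ('t \<times> 'x) set \<Rightarrow> ('t \<times> 'x \<Rightarrow> 'a) \<Rightarrow> bool" where
  "is_phom ar X A K f \<longleftrightarrow>
     (\<forall>p \<in> K. f p \<in> sdom A (fst p)) \<and>
     (\<forall>p. p \<notin> K \<longrightarrow> f p = undefined) \<and>
     (\<forall>R. \<forall>xs \<in> srel X R. (\<forall>i < length xs. (ar R ! i, xs ! i) \<in> K) \<longrightarrow>
            map (\<lambda>i. f (ar R ! i, xs ! i)) [0..<length xs] \<in> srel A R)"

definition subsets_k :: "('t, 'r, 'x) struc \<Rightarrow> nat \<Rightarrow> ('t \<times> 'x) set set" where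
  "subsets_k X k = {K. K \<subseteq> elems X \<and> finite K \<and> card K \<le> k}"

definition init_fam :: "('r \<Rightarrow> 't list) \<Rightarrow> ('t, 'r, 'x) struc \<Rightarrow> ('t, 'r, 'a) struc \<Rightarrow> nat
                        \<Rightarrow> ('t \<times> 'x) set \<Rightarrow> ('t \<times> 'x \<Rightarrow> 'a) set" where
  "init_fam ar X A k K = (if K \<in> subsets_k X k then {f. is_phom ar X A K f} else {})"

text \<open>Step (2), applied for all pairs L subset K simultaneously.\<close>
definition cons_step :: "('t, 'r, 'x) struc \<Rightarrow> nat
                         \<Rightarrow> (('t \<times> 'x) set \<Rightarrow> ('t \<times> 'x \<Rightarrow> 'a) set)
                         \<Rightarrow> (('t \<times> 'x) set \<Rightarrow> ('t \<times> 'x \<Rightarrow> 'a) set)" where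
  "cons_step X k F K =
     {f \<in> F K. (\<forall>L. L \<subset> K \<longrightarrow> restrict f L \<in> F L) \<and>
               (\<forall>K'. K' \<in> subsets_k X k \<and> K \<subset> K' \<longrightarrow> (\<exists>g \<in> F K'. restrict g K = f))}"

text \<open>Step (3): repeat until stable (the sequence is decreasing; its limit).\<close>
definition final_fam :: "('r \<Rightarrow> 't list) \<Rightarrow> ('t, 'r, 'x) struc \<Rightarrow> ('t, 'r, 'a) struc \<Rightarrow> nat
                         \<Rightarrow> ('t \<times> 'x) set \<Rightarrow> ('t \<times> 'x \<Rightarrow> 'a) set" where
  "final_fam ar X A k K = (\<Inter>N. ((cons_step X k ^^ N) (init_fam ar X A k)) K)"

text \<open>Elements of the copies of B^{F_K}: triples (K, sort u, b) with b : F_K -> B_u.\<close>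
definition kcarrier :: "('r \<Rightarrow> 't list) \<Rightarrow> ('t, 'r, 'x) struc \<Rightarrow> ('t, 'r, 'a) struc \<Rightarrow> nat
      \<Rightarrow> ('u, 's, 'b) struc \<Rightarrow> (('t \<times> 'x) set \<times> 'u \<times> (('t \<times> 'x \<Rightarrow> 'a) \<Rightarrow> 'b)) set" where
  "kcarrier ar X A k B =
     {(K, u, b). K \<in> subsets_k X k \<and> b \<in> final_fam ar X A k K \<rightarrow>\<^sub>E sdom B u}"

definition kbase :: "('r \<Rightarrow> 't list) \<Rightarrow> ('t, 'r, 'x) struc \<Rightarrow> ('t, 'r, 'a) struc \<Rightarrow> nat
      \<Rightarrow> ('u, 's, 'b) struc
      \<Rightarrow> ((('t \<times> 'x) set \<times> 'u \<times> (('t \<times> 'x \<Rightarrow> 'a) \<Rightarrow> 'b)) \<times>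
          (('t \<times> 'x) set \<times> 'u \<times> (('t \<times> 'x \<Rightarrow> 'a) \<Rightarrow> 'b))) set" where
  "kbase ar X A k B =
     {((K, u, restrict (\<lambda>f. b (restrict f L)) (final_fam ar X A k K)), (L, u, b)) | K L u b.
        K \<in> subsets_k X k \<and> L \<subseteq> K \<and> b \<in> final_fam ar X A k L \<rightarrow>\<^sub>E sdom B u}"

definition keq :: "('r \<Rightarrow> 't list) \<Rightarrow> ('t, 'r, 'x) struc \<Rightarrow> ('t, 'r, 'a) struc \<Rightarrow> nat
      \<Rightarrow> ('u, 's, 'b) struc
      \<Rightarrow> ((('t \<times> 'x) set \<times> 'u \<times> (('t \<times> 'x \<Rightarrow> 'a) \<Rightarrow> 'b)) \<times>
          (('t \<times> 'x) set \<times> 'u \<times> (('t \<times> 'x \<Rightarrow> 'a) \<Rightarrow> 'b))) set" where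
  "keq ar X A k B = (kbase ar X A k B \<union> (kbase ar X A k B)\<inverse>)\<^sup>*"

text \<open>The quotient structure (signature of B, with arity arB); relations are the images
  of the relations of the copies of B^{F_K}.\<close>
definition kappa :: "('r \<Rightarrow> 't list) \<Rightarrow> ('t, 'r, 'x) struc \<Rightarrow> ('t, 'r, 'a) struc \<Rightarrow> nat
      \<Rightarrow> ('s \<Rightarrow> 'u list) \<Rightarrow> ('u, 's, 'b) struc
      \<Rightarrow> ('u, 's, (('t \<times> 'x) set \<times> 'u \<times> (('t \<times> 'x \<Rightarrow> 'a) \<Rightarrow> 'b)) set) struc" where
  "kappa ar X A k arB B =
     \<lparr> sdom = (\<lambda>u. {keq ar X A k B `` {(K, u, b)} | K b. (K, u, b) \<in> kcarrier ar X A k B}),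
       srel = (\<lambda>R. {map (\<lambda>i. keq ar X A k B `` {(K, arB R ! i, bs ! i)}) [0..<length (arB R)] | K bs.
                    K \<in> subsets_k X k \<and> length bs = length (arB R) \<and>
                    (\<forall>i < length bs. bs ! i \<in> final_fam ar X A k K \<rightarrow>\<^sub>E sdom B (arB R ! i)) \<and>
                    (\<forall>f \<in> final_fam ar X A k K. map (\<lambda>i. (bs ! i) f) [0..<length bs] \<in> srel B R)}) \<rparr>"

section \<open>Cyclic groups Z_n (n >= 1) and Z (encoded as n = 0)\<close>

definition gcar :: "nat \<Rightarrow> int set" where
  "gcar n = (if n = 0 then UNIV else {0..<int n})"

definition gadd :: "nat \<Rightarrow> int \<Rightarrow> int \<Rightarrow> int" where
  "gadd n x y = (x + y) mod int n"

datatype gsym = GAdd | GConst int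

fun gar :: "gsym \<Rightarrow> unit list" where
  "gar GAdd = [(), (), ()]"
| "gar (GConst b) = [()]"

definition gsig :: "nat \<Rightarrow> gsym set" where
  "gsig n = insert GAdd (GConst ` gcar n)"

definition Gtempl :: "nat \<Rightarrow> (unit, gsym, int) struc" where
  "Gtempl n =
     \<lparr> sdom = (\<lambda>_. gcar n),
       srel = (\<lambda>R. case R of
                GAdd \<Rightarrow> {[x1, x2, y] | x1 x2 y. x1 \<in> gcar n \<and> x2 \<in> gcar n \<and> y = gadd n x1 x2}
              | GConst b \<Rightarrow> {[b]}) \<rparr>"

text \<open>Sums in G = Z_n are integer sums reduced mod n (for n = 0, mod 0 is the identity).\<close>
definition affine_accepts :: "nat \<Rightarrow> nat \<Rightarrow> ('r \<Rightarrow> 't list) \<Rightarrow> ('t, 'r, 'a) struc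
                              \<Rightarrow> ('t, 'r, 'x) struc \<Rightarrow> bool" where
  "affine_accepts n k ar A X \<longleftrightarrow>
     (\<exists>x :: ('t \<times> 'x) set \<Rightarrow> ('t \<times> 'x \<Rightarrow> 'a) \<Rightarrow> int.
        (\<forall>K \<in> subsets_k X k. \<forall>f \<in> final_fam ar X A k K. x K f \<in> gcar n) \<and>
        (\<forall>K \<in> subsets_k X k. (\<Sum>f \<in> final_fam ar X A k K. x K f) mod int n = 1 mod int n) \<and>
        (\<forall>K \<in> subsets_k X k. \<forall>L. L \<subset> K \<longrightarrow>
           (\<forall>g \<in> final_fam ar X A k L.
              (\<Sum>f \<in> {f \<in> final_fam ar X A k K. restrict f L = g}. x K f) mod int n
                = x L g mod int n)))"

text \<open>Instances range over finite structures; up to isomorphism their elements can be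
  taken to be natural numbers.\<close>
definition affine_solves :: "nat \<Rightarrow> nat \<Rightarrow> ('r \<Rightarrow> 't list) \<Rightarrow> ('t, 'r, 'a) struc
                             \<Rightarrow> ('t, 'r, 'b) struc \<Rightarrow> bool" where
  "affine_solves n k ar A A' \<longleftrightarrow>
     (\<forall>X :: ('t, 'r, nat) struc. wf_struc ar X \<and> finite_struc X \<and> \<not> homto UNIV ar X A'
        \<longrightarrow> \<not> affine_accepts n k ar A X)"

definition kappa_is_reduction :: "nat \<Rightarrow> nat \<Rightarrow> ('r \<Rightarrow> 't list) \<Rightarrow> ('t, 'r, 'a) struc
                                  \<Rightarrow> ('t, 'r, 'b) struc \<Rightarrow> bool" where
  "kappa_is_reduction n k ar A A' \<longleftrightarrow>
     (\<forall>X :: ('t, 'r, nat) struc. wf_struc ar X \<and> finite_struc X \<longrightarrow>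
        (homto UNIV ar X A \<longrightarrow> homto (gsig n) gar (kappa ar X A k gar (Gtempl n)) (Gtempl n)) \<and>
        (homto (gsig n) gar (kappa ar X A k gar (Gtempl n)) (Gtempl n) \<longrightarrow> homto UNIV ar X A'))"

end

theory Submission
  imports Defs
begin

text \<open>
  An element of \<open>\<kappa>\<^sub>k(X)\<close> is the class of a pair \<open>(K; b)\<close> with \<open>b : \<F>\<^sub>K \<rightarrow> G\<close>.
  A homomorphism \<open>h : \<kappa>\<^sub>k(X) \<rightarrow> G\<close>, restricted to the copy \<open>G^\<F>\<^sub>K\<close>, is an
  additive map fixing constants; as \<open>G\<close> is cyclic, it is the map
  \<open>b \<mapsto> \<Sum>\<^sub>f x\<^sub>K\<^sub>,\<^sub>f b(f)\<close>, where \<open>x\<^sub>K\<^sub>,\<^sub>f\<close> is the value of \<open>h\<close> on the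
  indicator of \<open>f\<close>.  Preservation of constants says \<open>\<Sum>\<^sub>f x\<^sub>K\<^sub>,\<^sub>f = 1\<close>, and
  compatibility with the identifications \<open>(K; b \<circ> \<rho>\<^sub>K\<^sub>,\<^sub>L) \<sim> (L; b)\<close> says exactly
  that \<open>x\<close> has the right marginals.  Conversely, every solution \<open>x\<close> of the affine
  system defines such an \<open>h\<close> by these weighted sums.  Hence the relaxation accepts \<open>X\<close>
  iff \<open>\<kappa>\<^sub>k(X) \<rightarrow> G\<close>; since a homomorphism \<open>X \<rightarrow> A\<close> yields the point-mass
  solution, both conditions hold on yes-instances, and the two statements coincide.
\<close>

lemma mod_in_gcar: "x mod int n \<in> gcar n"
  by (auto simp: gcar_def)

lemma mod_gcar_eq: "x \<in> gcar n \<Longrightarrow> x mod int n = x"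
  by (cases "n = 0") (auto simp: gcar_def)

lemma zero_in_gcar: "0 \<in> gcar n"
  by (auto simp: gcar_def)

lemma one_in_gcar: "n \<noteq> 1 \<Longrightarrow> 1 \<in> gcar n"
  by (auto simp: gcar_def)

lemma sdom_Gtempl [simp]: "sdom (Gtempl n) u = gcar n"
  by (simp add: Gtempl_def)

lemma srel_Gtempl_GAdd [simp]:
  "srel (Gtempl n) GAdd = {[x1, x2, y] | x1 x2 y. x1 \<in> gcar n \<and> x2 \<in> gcar n \<and> y = gadd n x1 x2}"
  by (simp add: Gtempl_def)

lemma srel_Gtempl_GConst [simp]: "srel (Gtempl n) (GConst c) = {[c]}"
  by (simp add: Gtempl_def)

lemma upt_3: "[0..<3] = [0, 1, 2 :: nat]"
  by (simp add: upt_rec)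

section \<open>Additive maps on \<open>G\<^sup>F\<close> are linear\<close>

definition unit_vec :: "'f set \<Rightarrow> 'f \<Rightarrow> 'f \<Rightarrow> int" where
  "unit_vec F f = restrict (\<lambda>g. if g = f then 1 else 0) F"

lemma unit_vec_in_gcar: "n \<noteq> 1 \<Longrightarrow> unit_vec F f \<in> F \<rightarrow>\<^sub>E gcar n"
  by (auto simp: unit_vec_def one_in_gcar zero_in_gcar)

locale mod_additive =
  fixes n :: nat and F :: "'f set" and \<phi> :: "('f \<Rightarrow> int) \<Rightarrow> int"
  assumes finite_F: "finite F"
    and additive: "\<And>b1 b2. b1 \<in> F \<rightarrow>\<^sub>E gcar n \<Longrightarrow> b2 \<in> F \<rightarrow>\<^sub>E gcar n \<Longrightarrow>
      \<phi> (restrict (\<lambda>f. gadd n (b1 f) (b2 f)) F) mod int n = (\<phi> b1 + \<phi> b2) mod int n"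
begin

lemma zero: "\<phi> (restrict (\<lambda>_. 0) F) mod int n = 0"
proof -
  let ?z = "restrict (\<lambda>_. 0::int) F"
  have "?z \<in> F \<rightarrow>\<^sub>E gcar n" by (simp add: zero_in_gcar)
  moreover have "restrict (\<lambda>f. gadd n (?z f) (?z f)) F = ?z" by (auto simp: gadd_def)
  ultimately have "\<phi> ?z mod int n = (\<phi> ?z + \<phi> ?z) mod int n" using additive by metis
  then show ?thesis by (metis add_diff_cancel_right' dvd_imp_mod_0 mod_eq_dvd_iff)
qed

lemma scale:
  "\<phi> (restrict (\<lambda>g. if g = f then c mod int n else 0) F) mod int n
     = (c * \<phi> (unit_vec F f)) mod int n"
proof (cases "n = 1")
  case False
  define sc where "sc c = restrict (\<lambda>g. if g = f then c mod int n else 0) F" for c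
  have sc_in: "sc c \<in> F \<rightarrow>\<^sub>E gcar n" for c
    by (auto simp: sc_def mod_in_gcar zero_in_gcar)
  have "sc (c + 1) = restrict (\<lambda>g. gadd n (sc c g) (unit_vec F f g)) F" for c
    by (auto simp: sc_def unit_vec_def gadd_def mod_add_left_eq)
  then have succ: "\<phi> (sc (c + 1)) mod int n = (\<phi> (sc c) + \<phi> (unit_vec F f)) mod int n" for c
    using additive[OF sc_in unit_vec_in_gcar[OF False]] by simp
  have "\<phi> (sc c) mod int n = (c * \<phi> (unit_vec F f)) mod int n"
  proof (induction c rule: int_induct[where k = 0])
    case base
    have "sc 0 = restrict (\<lambda>_. 0) F" by (auto simp: sc_def)
    then show ?case using zero by (simp only: mult_zero_left mod_0)
  next
    case (step1 i)
    then show ?case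
      using succ[of i] by (metis distrib_right mod_add_left_eq mult_1)
  next
    case (step2 i)
    have "(\<phi> (sc i) - \<phi> (unit_vec F f)) mod int n = \<phi> (sc (i - 1)) mod int n"
      using succ[of "i - 1"] by (metis add_diff_cancel_right' diff_add_cancel mod_diff_left_eq)
    then show ?case
      using step2 by (metis left_diff_distrib mod_diff_left_eq mult_1)
  qed
  then show ?thesis by (simp add: sc_def)
qed simp

lemma linear:
  assumes b: "b \<in> F \<rightarrow>\<^sub>E gcar n"
  shows "\<phi> b mod int n = (\<Sum>f\<in>F. b f * \<phi> (unit_vec F f)) mod int n"
proof -
  define part where "part S = restrict (\<lambda>g. if g \<in> S then b g else 0) F" for S
  have part_in: "part S \<in> F \<rightarrow>\<^sub>E gcar n" for S
    using b by (auto simp: part_def zero_in_gcar)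
  have "\<phi> (part S) mod int n = (\<Sum>f\<in>S. b f * \<phi> (unit_vec F f)) mod int n" if "S \<subseteq> F" for S
    using finite_subset[OF that finite_F] that
  proof (induction S rule: finite_subset_induct)
    case empty
    have "part {} = restrict (\<lambda>_. 0) F" by (auto simp: part_def)
    then show ?case using zero by (simp only: sum.empty mod_0)
  next
    case (insert a S)
    let ?single = "restrict (\<lambda>g. if g = a then b a mod int n else 0) F"
    have single_in: "?single \<in> F \<rightarrow>\<^sub>E gcar n" by (auto simp: mod_in_gcar zero_in_gcar)
    have "part (insert a S) = restrict (\<lambda>g. gadd n (part S g) (?single g)) F"
      using insert.hyps b by (auto simp: part_def gadd_def mod_gcar_eq PiE_iff intro!: restrict_ext)
    then have "\<phi> (part (insert a S)) mod int n
        = (\<phi> (part S) mod int n + \<phi> ?single mod int n) mod int n"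
      using additive[OF part_in single_in] by (simp add: mod_add_eq)
    also have "\<dots> = (\<Sum>f\<in>insert a S. b f * \<phi> (unit_vec F f)) mod int n"
      using insert scale[of a "b a"] by (simp add: mod_add_eq add.commute)
    finally show ?case .
  qed
  moreover have "part F = b"
    using b by (auto simp: part_def fun_eq_iff PiE_def extensional_def)
  ultimately show ?thesis by auto
qed

end

section \<open>The families \<open>\<F>\<^sub>K\<close> of \<open>k\<close>-consistency\<close>

lemma subsets_k_subset: "K \<in> subsets_k X k \<Longrightarrow> L \<subseteq> K \<Longrightarrow> L \<in> subsets_k X k"
  unfolding subsets_k_def using card_mono[of K L] finite_subset[of L K] by auto

lemma final_fam_memD:
  assumes "f \<in> final_fam ar X A k K"
  shows "K \<in> subsets_k X k" and "is_phom ar X A K f"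
proof -
  have "f \<in> init_fam ar X A k K"
    using assms unfolding final_fam_def by (metis INT_E UNIV_I funpow_0)
  then show "K \<in> subsets_k X k" and "is_phom ar X A K f"
    by (auto simp: init_fam_def split: if_splits)
qed

lemma restrict_final_fam_self: "f \<in> final_fam ar X A k K \<Longrightarrow> restrict f K = f"
  using final_fam_memD(2) unfolding is_phom_def restrict_def fun_eq_iff by metis

lemma restrict_final_fam:
  assumes "L \<subseteq> K" and f: "f \<in> final_fam ar X A k K"
  shows "restrict f L \<in> final_fam ar X A k L"
proof (cases "L = K")
  case True
  then show ?thesis using f restrict_final_fam_self by metis
next
  case False
  have "restrict f L \<in> ((cons_step X k ^^ N) (init_fam ar X A k)) L" for N
  proof -
    have "f \<in> cons_step X k ((cons_step X k ^^ N) (init_fam ar X A k)) K"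
      using f unfolding final_fam_def by (metis INT_E UNIV_I funpow.simps(2) o_apply)
    then show ?thesis using \<open>L \<subseteq> K\<close> False unfolding cons_step_def by blast
  qed
  then show ?thesis unfolding final_fam_def by blast
qed

lemma finite_final_fam:
  assumes "finite_struc A"
  shows "finite (final_fam ar X A k K)"
proof (cases "K \<in> subsets_k X k")
  case True
  have "final_fam ar X A k K \<subseteq> K \<rightarrow>\<^sub>E snd ` elems A"
  proof
    fix f assume "f \<in> final_fam ar X A k K"
    then have "is_phom ar X A K f" by (rule final_fam_memD)
    then show "f \<in> K \<rightarrow>\<^sub>E snd ` elems A"
      unfolding is_phom_def elems_def by (force simp: PiE_def extensional_def)
  qed
  moreover have "finite (K \<rightarrow>\<^sub>E snd ` elems A)"
    using True assms by (intro finite_PiE) (auto simp: subsets_k_def finite_struc_def)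
  ultimately show ?thesis by (rule finite_subset)
next
  case False
  then have "final_fam ar X A k K = {}" using final_fam_memD(1) by blast
  then show ?thesis by simp
qed

lemma restrict_hom_is_phom:
  assumes hom: "is_hom UNIV ar X A g" and K: "K \<subseteq> elems X"
  shows "is_phom ar X A K (restrict (case_prod g) K)"
  unfolding is_phom_def
proof (intro conjI allI ballI impI)
  fix R xs assume xs: "xs \<in> srel X R" and "\<forall>i < length xs. (ar R ! i, xs ! i) \<in> K"
  then have "map (\<lambda>i. restrict (case_prod g) K (ar R ! i, xs ! i)) [0..<length xs]
      = map (\<lambda>i. g (ar R ! i) (xs ! i)) [0..<length xs]" by simp
  moreover have "map (\<lambda>i. g (ar R ! i) (xs ! i)) [0..<length xs] \<in> srel A R"
    using hom xs unfolding is_hom_def by blast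
  ultimately show "map (\<lambda>i. restrict (case_prod g) K (ar R ! i, xs ! i)) [0..<length xs] \<in> srel A R"
    by (simp only:)
qed (use K hom in \<open>auto simp: is_hom_def elems_def\<close>)

lemma restrict_hom_in_final_fam:
  assumes hom: "is_hom UNIV ar X A g" and K: "K \<in> subsets_k X k"
  shows "restrict (case_prod g) K \<in> final_fam ar X A k K"
proof -
  have "\<forall>K \<in> subsets_k X k. restrict (case_prod g) K \<in> ((cons_step X k ^^ N) (init_fam ar X A k)) K"
    for N
  proof (induction N)
    case 0
    have "is_phom ar X A K (restrict (case_prod g) K)" if "K \<in> subsets_k X k" for K
      using restrict_hom_is_phom[OF hom] that by (simp add: subsets_k_def)
    then show ?case by (simp add: init_fam_def del: restrict_apply)
  next
    case (Suc N)
    let ?P = "(cons_step X k ^^ N) (init_fam ar X A k)"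
    have restrict_mono: "restrict (restrict (case_prod g) K') K'' = restrict (case_prod g) K''"
      if "K'' \<subseteq> K'" for K' K''
      using that by (simp add: Int_absorb1 del: restrict_apply)
    have "restrict (case_prod g) K \<in> cons_step X k ?P K" if K: "K \<in> subsets_k X k" for K
      unfolding cons_step_def[of X k ?P] mem_Collect_eq
    proof (intro conjI allI impI)
      show "restrict (case_prod g) K \<in> ?P K" using Suc K by blast
      show "restrict (restrict (case_prod g) K) L \<in> ?P L" if "L \<subset> K" for L
        using that Suc subsets_k_subset[OF K, of L] restrict_mono[of L K] by (metis psubset_imp_subset)
      show "\<exists>h \<in> ?P K'. restrict h K = restrict (case_prod g) K"
        if "K' \<in> subsets_k X k \<and> K \<subset> K'" for K'
        using that Suc restrict_mono[of K K'] by (metis psubset_imp_subset)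
    qed
    then show ?case by (simp del: restrict_apply)
  qed
  then show ?thesis using K unfolding final_fam_def by blast
qed

section \<open>Homomorphisms \<open>X \<rightarrow> A\<close> give solutions of the affine system\<close>

definition affine_solution :: "nat \<Rightarrow> nat \<Rightarrow> ('r \<Rightarrow> 't list) \<Rightarrow> ('t, 'r, 'a) struc
    \<Rightarrow> ('t, 'r, 'x) struc \<Rightarrow> (('t \<times> 'x) set \<Rightarrow> ('t \<times> 'x \<Rightarrow> 'a) \<Rightarrow> int) \<Rightarrow> bool" where
  "affine_solution n k ar A X x \<longleftrightarrow>
     (\<forall>K \<in> subsets_k X k. \<forall>f \<in> final_fam ar X A k K. x K f \<in> gcar n) \<and>
     (\<forall>K \<in> subsets_k X k. (\<Sum>f \<in> final_fam ar X A k K. x K f) mod int n = 1 mod int n) \<and>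
     (\<forall>K \<in> subsets_k X k. \<forall>L. L \<subset> K \<longrightarrow>
        (\<forall>g \<in> final_fam ar X A k L.
           (\<Sum>f \<in> {f \<in> final_fam ar X A k K. restrict f L = g}. x K f) mod int n
             = x L g mod int n))"

lemma affine_accepts_iff_solution:
  "affine_accepts n k ar A X \<longleftrightarrow> (\<exists>x. affine_solution n k ar A X x)"
  by (simp add: affine_accepts_def affine_solution_def)

lemma hom_imp_affine_solution:
  assumes finA: "finite_struc A" and hom: "is_hom UNIV ar X A g"
  shows "affine_solution n k ar A X (\<lambda>K f. if f = restrict (case_prod g) K then 1 mod int n else 0)"
    (is "affine_solution n k ar A X ?x")
proof -
  let ?F = "final_fam ar X A k"
  have in_F: "restrict (case_prod g) K \<in> ?F K" if "K \<in> subsets_k X k" for K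
    using restrict_hom_in_final_fam[OF hom that] .
  have "(\<Sum>f\<in>{f \<in> ?F K. restrict f L = h}. ?x K f) mod int n = ?x L h mod int n"
    if "K \<in> subsets_k X k" "L \<subset> K" for K L h
  proof -
    have "restrict (restrict (case_prod g) K) L = restrict (case_prod g) L"
      using \<open>L \<subset> K\<close> by (auto simp: restrict_def fun_eq_iff)
    then show ?thesis
      using in_F[OF \<open>K \<in> subsets_k X k\<close>] finite_final_fam[OF finA, of ar X k K]
      by simp
  qed
  moreover have "(\<Sum>f\<in>?F K. ?x K f) = 1 mod int n" if "K \<in> subsets_k X k" for K
    using in_F[OF that] finite_final_fam[OF finA, of ar X k K] by simp
  ultimately show ?thesis
    unfolding affine_solution_def by (auto simp: mod_in_gcar zero_in_gcar)
qed

section \<open>Solutions of the affine system give homomorphisms \<open>\<kappa>\<^sub>k(X) \<rightarrow> G\<close>\<close>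

lemma sum_mult_mod_eq:
  fixes x y :: "'i \<Rightarrow> int"
  shows "(\<Sum>i\<in>S. x i * (y i mod m)) mod m = (\<Sum>i\<in>S. x i * y i) mod m"
proof -
  have "(\<Sum>i\<in>S. x i * (y i mod m)) mod m = (\<Sum>i\<in>S. x i * (y i mod m) mod m) mod m"
    by (simp add: mod_sum_eq)
  also have "\<dots> = (\<Sum>i\<in>S. x i * y i) mod m"
    by (simp add: mod_mult_right_eq mod_sum_eq)
  finally show ?thesis .
qed

lemma sum_pushforward_mod:
  fixes x :: "'s \<Rightarrow> int"
  assumes "finite S" "finite T" "r ` S \<subseteq> T"
    and marginal: "\<And>g. g \<in> T \<Longrightarrow> (\<Sum>f\<in>{f \<in> S. r f = g}. x f) mod m = y g mod m"
  shows "(\<Sum>f\<in>S. x f * b (r f)) mod m = (\<Sum>g\<in>T. y g * b g) mod m"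
proof -
  have "(\<Sum>f\<in>S. x f * b (r f)) = (\<Sum>g\<in>T. b g * (\<Sum>f\<in>{f \<in> S. r f = g}. x f))"
    by (simp add: sum.group[OF assms(1-3), symmetric] sum_distrib_left mult.commute)
  also have "\<dots> mod m = (\<Sum>g\<in>T. b g * ((\<Sum>f\<in>{f \<in> S. r f = g}. x f) mod m) mod m) mod m"
    by (simp add: mod_sum_eq mod_mult_right_eq)
  also have "\<dots> = (\<Sum>g\<in>T. y g * b g) mod m"
    by (simp add: marginal mod_sum_eq mod_mult_right_eq mult.commute cong: sum.cong)
  finally show ?thesis .
qed

lemma affine_solution_restrict_sum:
  assumes finA: "finite_struc A" and x: "affine_solution n k ar A X x"
    and K: "K \<in> subsets_k X k" and "L \<subseteq> K"
  shows "(\<Sum>f\<in>final_fam ar X A k K. x K f * b (restrict f L)) mod int n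
       = (\<Sum>g\<in>final_fam ar X A k L. x L g * b g) mod int n"
proof (cases "L = K")
  case True
  then show ?thesis by (simp add: restrict_final_fam_self cong: sum.cong)
next
  case False
  show ?thesis
  proof (rule sum_pushforward_mod[where r = "\<lambda>f. restrict f L"])
    show "finite (final_fam ar X A k K)" "finite (final_fam ar X A k L)"
      using finA by (rule finite_final_fam)+
    show "(\<lambda>f. restrict f L) ` final_fam ar X A k K \<subseteq> final_fam ar X A k L"
      using restrict_final_fam[OF \<open>L \<subseteq> K\<close>] by blast
    show "(\<Sum>f\<in>{f \<in> final_fam ar X A k K. restrict f L = g}. x K f) mod int n = x L g mod int n"
      if "g \<in> final_fam ar X A k L" for g
      using x K False \<open>L \<subseteq> K\<close> that unfolding affine_solution_def by blast
  qed
qed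

lemma affine_combination_preserves_Gtempl:
  fixes w :: "'f \<Rightarrow> int"
  assumes R: "R \<in> gsig n" and len: "length bs = length (gar R)"
    and sum_w: "(\<Sum>f\<in>S. w f) mod int n = 1 mod int n"
    and rel: "\<forall>f\<in>S. map (\<lambda>i. (bs ! i) f) [0..<length bs] \<in> srel (Gtempl n) R"
  shows "map (\<lambda>i. (\<Sum>f\<in>S. w f * (bs ! i) f) mod int n) [0..<length bs] \<in> srel (Gtempl n) R"
proof (cases R)
  case GAdd
  then obtain b0 b1 b2 where bs: "bs = [b0, b1, b2]"
    using len by (auto simp: numeral_3_eq_3 length_Suc_conv)
  have "b2 f = (b0 f + b1 f) mod int n" if "f \<in> S" for f
    using rel that by (auto simp: bs GAdd upt_3 gadd_def)
  then have "(\<Sum>f\<in>S. w f * b2 f) mod int n = (\<Sum>f\<in>S. w f * ((b0 f + b1 f) mod int n)) mod int n"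
    by (simp cong: sum.cong)
  also have "\<dots> = (\<Sum>f\<in>S. w f * (b0 f + b1 f)) mod int n"
    by (rule sum_mult_mod_eq)
  also have "\<dots> = gadd n ((\<Sum>f\<in>S. w f * b0 f) mod int n) ((\<Sum>f\<in>S. w f * b1 f) mod int n)"
    by (simp add: gadd_def distrib_left sum.distrib mod_add_eq)
  finally show ?thesis by (simp add: bs GAdd upt_3 mod_in_gcar)
next
  case (GConst c)
  then obtain b0 where bs: "bs = [b0]" using len by (auto simp: length_Suc_conv)
  have c: "c \<in> gcar n" using R GConst by (auto simp: gsig_def)
  have "b0 f = c" if "f \<in> S" for f
    using rel that by (auto simp: bs GConst)
  then have "(\<Sum>f\<in>S. w f * b0 f) mod int n = (c * ((\<Sum>f\<in>S. w f) mod int n)) mod int n"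
    by (simp add: sum_distrib_left mult.commute mod_mult_right_eq cong: sum.cong)
  also have "\<dots> = c"
    using sum_w mod_gcar_eq[OF c] by (metis mod_mult_right_eq mult.right_neutral)
  finally show ?thesis by (simp add: bs GConst)
qed

lemma sym_rtrancl_invariant:
  assumes "\<And>p q. (p, q) \<in> R \<Longrightarrow> \<phi> p = \<phi> q" and "(p, q) \<in> (R \<union> R\<inverse>)\<^sup>*"
  shows "\<phi> p = \<phi> q"
  using assms(2) by induction (auto dest: assms(1))

lemma sym_rtrancl_Image_eq:
  "(p, q) \<in> (R \<union> R\<inverse>)\<^sup>* \<Longrightarrow> (R \<union> R\<inverse>)\<^sup>* `` {p} = (R \<union> R\<inverse>)\<^sup>* `` {q}"
  using sym_rtrancl[OF sym_Un_converse, of R]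
  by (auto intro: rtrancl_trans dest: symD)

lemma keq_refl: "p \<in> keq ar X A k B `` {p}"
  by (simp add: keq_def)

lemma srel_kappa_iff:
  "xs \<in> srel (kappa ar X A k arB B) R \<longleftrightarrow>
     (\<exists>K bs. xs = map (\<lambda>i. keq ar X A k B `` {(K, arB R ! i, bs ! i)}) [0..<length (arB R)] \<and>
        K \<in> subsets_k X k \<and> length bs = length (arB R) \<and>
        (\<forall>i < length bs. bs ! i \<in> final_fam ar X A k K \<rightarrow>\<^sub>E sdom B (arB R ! i)) \<and>
        (\<forall>f \<in> final_fam ar X A k K. map (\<lambda>i. (bs ! i) f) [0..<length bs] \<in> srel B R))"
  by (simp add: kappa_def)

text \<open>The homomorphism evaluates \<open>(K; b)\<close> as the \<open>x\<^sub>K\<close>-weighted sum of \<open>b\<close>; it is well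
  defined on classes because the weights have the right marginals.\<close>

lemma affine_solution_imp_homto_kappa:
  fixes X :: "('t, 'r, 'x) struc" and A :: "('t, 'r, 'a) struc"
  assumes finA: "finite_struc A" and x: "affine_solution n k ar A X x"
  shows "homto (gsig n) gar (kappa ar X A k gar (Gtempl n)) (Gtempl n)"
proof -
  let ?F = "final_fam ar X A k"
  let ?E = "keq ar X A k (Gtempl n)"
  define \<phi> where "\<phi> p = (\<Sum>f\<in>?F (fst p). x (fst p) f * snd (snd p) f) mod int n"
    for p :: "('t \<times> 'x) set \<times> unit \<times> (('t \<times> 'x \<Rightarrow> 'a) \<Rightarrow> int)"
  have "\<phi> p = \<phi> q" if "(p, q) \<in> kbase ar X A k (Gtempl n)" for p q
    using that affine_solution_restrict_sum[OF finA x]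
    unfolding kbase_def \<phi>_def by (auto cong: sum.cong)
  then have \<phi>_keq: "\<phi> p = \<phi> q" if "(p, q) \<in> ?E" for p q
    using that unfolding keq_def by (rule sym_rtrancl_invariant)
  define h where "h (u :: unit) C = \<phi> (SOME p. p \<in> C)" for u C
  have h_class: "h u (?E `` {p}) = \<phi> p" for u p
    unfolding h_def using someI[where P = "\<lambda>q. q \<in> ?E `` {p}", OF keq_refl] \<phi>_keq
    by (metis Image_singleton_iff)
  have \<phi>_in: "\<phi> p \<in> gcar n" for p by (simp add: \<phi>_def mod_in_gcar)
  have sum_x: "(\<Sum>f\<in>?F K. x K f) mod int n = 1 mod int n" if "K \<in> subsets_k X k" for K
    using x that unfolding affine_solution_def by blast
  have "is_hom (gsig n) gar (kappa ar X A k gar (Gtempl n)) (Gtempl n) h"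
    unfolding is_hom_def
  proof (intro conjI allI ballI)
    fix t C assume "C \<in> sdom (kappa ar X A k gar (Gtempl n)) t"
    then show "h t C \<in> sdom (Gtempl n) t" by (auto simp: kappa_def h_class \<phi>_in)
  next
    fix R xs assume R: "R \<in> gsig n" and "xs \<in> srel (kappa ar X A k gar (Gtempl n)) R"
    then obtain K bs where xs: "xs = map (\<lambda>i. ?E `` {(K, gar R ! i, bs ! i)}) [0..<length (gar R)]"
      and K: "K \<in> subsets_k X k" and len: "length bs = length (gar R)"
      and rel: "\<forall>f\<in>?F K. map (\<lambda>i. (bs ! i) f) [0..<length bs] \<in> srel (Gtempl n) R"
      unfolding srel_kappa_iff by blast
    have "map (\<lambda>i. h (gar R ! i) (xs ! i)) [0..<length xs]
        = map (\<lambda>i. \<phi> (K, (), bs ! i)) [0..<length bs]"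
      using len by (simp add: xs h_class)
    then show "map (\<lambda>i. h (gar R ! i) (xs ! i)) [0..<length xs] \<in> srel (Gtempl n) R"
      using affine_combination_preserves_Gtempl[OF R len sum_x[OF K] rel] by (simp add: \<phi>_def)
  qed
  then show ?thesis unfolding homto_def by blast
qed

section \<open>Homomorphisms \<open>\<kappa>\<^sub>k(X) \<rightarrow> G\<close> give solutions of the affine system\<close>

lemma kappa_GAdd_triple:
  assumes "K \<in> subsets_k X k"
    and "b1 \<in> final_fam ar X A k K \<rightarrow>\<^sub>E gcar n" and "b2 \<in> final_fam ar X A k K \<rightarrow>\<^sub>E gcar n"
  shows "[keq ar X A k (Gtempl n) `` {(K, (), b1)}, keq ar X A k (Gtempl n) `` {(K, (), b2)},
          keq ar X A k (Gtempl n) `` {(K, (), restrict (\<lambda>f. gadd n (b1 f) (b2 f)) (final_fam ar X A k K))}]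
         \<in> srel (kappa ar X A k gar (Gtempl n)) GAdd"
  unfolding srel_kappa_iff
  using assms
  by (intro exI[of _ K] exI[of _ "[b1, b2, restrict (\<lambda>f. gadd n (b1 f) (b2 f)) (final_fam ar X A k K)]"])
     (auto simp: upt_3 less_Suc_eq numeral_3_eq_3 nth_Cons' gadd_def mod_in_gcar)

lemma kappa_GConst_single:
  assumes "K \<in> subsets_k X k" and "c \<in> gcar n"
  shows "[keq ar X A k (Gtempl n) `` {(K, (), restrict (\<lambda>_. c) (final_fam ar X A k K))}]
         \<in> srel (kappa ar X A k gar (Gtempl n)) (GConst c)"
  unfolding srel_kappa_iff
  using assms by (intro exI[of _ K] exI[of _ "[restrict (\<lambda>_. c) (final_fam ar X A k K)]"]) auto

lemma kappa_hom_in_gcar: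
  assumes h: "is_hom (gsig n) gar (kappa ar X A k gar (Gtempl n)) (Gtempl n) h"
    and "K \<in> subsets_k X k" "b \<in> final_fam ar X A k K \<rightarrow>\<^sub>E gcar n"
  shows "h () (keq ar X A k (Gtempl n) `` {(K, (), b)}) \<in> gcar n"
proof -
  have "keq ar X A k (Gtempl n) `` {(K, (), b)} \<in> sdom (kappa ar X A k gar (Gtempl n)) ()"
    using assms(2,3) by (auto simp: kappa_def kcarrier_def)
  then show ?thesis using h unfolding is_hom_def by fastforce
qed

lemma kappa_hom_mod_additive:
  assumes finA: "finite_struc A"
    and h: "is_hom (gsig n) gar (kappa ar X A k gar (Gtempl n)) (Gtempl n) h"
    and K: "K \<in> subsets_k X k"
  shows "mod_additive n (final_fam ar X A k K) (\<lambda>b. h () (keq ar X A k (Gtempl n) `` {(K, (), b)}))"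
proof
  show "finite (final_fam ar X A k K)" using finA by (rule finite_final_fam)
  fix b1 b2
  assume "b1 \<in> final_fam ar X A k K \<rightarrow>\<^sub>E gcar n" "b2 \<in> final_fam ar X A k K \<rightarrow>\<^sub>E gcar n"
  from h kappa_GAdd_triple[OF K this]
  show "h () (keq ar X A k (Gtempl n) `` {(K, (), restrict (\<lambda>f. gadd n (b1 f) (b2 f)) (final_fam ar X A k K))})
          mod int n
      = (h () (keq ar X A k (Gtempl n) `` {(K, (), b1)}) + h () (keq ar X A k (Gtempl n) `` {(K, (), b2)}))
          mod int n"
    unfolding is_hom_def by (force simp: gsig_def upt_3 gadd_def)
qed

lemma kappa_hom_const:
  assumes h: "is_hom (gsig n) gar (kappa ar X A k gar (Gtempl n)) (Gtempl n) h"
    and "K \<in> subsets_k X k" "c \<in> gcar n"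
  shows "h () (keq ar X A k (Gtempl n) `` {(K, (), restrict (\<lambda>_. c) (final_fam ar X A k K))}) = c"
  using h kappa_GConst_single[OF assms(2,3)] assms(3) unfolding is_hom_def
  by (force simp: gsig_def)

lemma kappa_hom_marginal:
  assumes finA: "finite_struc A"
    and h: "is_hom (gsig n) gar (kappa ar X A k gar (Gtempl n)) (Gtempl n) h" and n: "n \<noteq> 1"
    and K: "K \<in> subsets_k X k" and LK: "L \<subseteq> K" and g: "g \<in> final_fam ar X A k L"
  defines "\<phi> M b \<equiv> h () (keq ar X A k (Gtempl n) `` {(M, (), b)})"
  shows "(\<Sum>f\<in>{f \<in> final_fam ar X A k K. restrict f L = g}. \<phi> K (unit_vec (final_fam ar X A k K) f))
           mod int n
       = \<phi> L (unit_vec (final_fam ar X A k L) g) mod int n"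
proof -
  let ?F = "final_fam ar X A k"
  let ?pulled = "restrict (\<lambda>f. unit_vec (?F L) g (restrict f L)) (?F K)"
  have "((K, (), ?pulled), (L, (), unit_vec (?F L) g)) \<in> kbase ar X A k (Gtempl n)"
    unfolding kbase_def using K LK unit_vec_in_gcar[OF n, of "?F L" g] by (simp del: restrict_apply)
  then have "((K, (), ?pulled), (L, (), unit_vec (?F L) g)) \<in> keq ar X A k (Gtempl n)"
    unfolding keq_def by blast
  then have "\<phi> L (unit_vec (?F L) g) = \<phi> K ?pulled"
    unfolding \<phi>_def keq_def by (simp add: sym_rtrancl_Image_eq)
  moreover have "?pulled \<in> ?F K \<rightarrow>\<^sub>E gcar n"
    using unit_vec_in_gcar[OF n, of "?F L" g] restrict_final_fam[OF LK, of _ ar X A k]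
    by (auto simp del: restrict_apply)
  ultimately have "\<phi> L (unit_vec (?F L) g) mod int n
      = (\<Sum>f\<in>?F K. ?pulled f * \<phi> K (unit_vec (?F K) f)) mod int n"
    using mod_additive.linear[OF kappa_hom_mod_additive[OF finA h K]] unfolding \<phi>_def by simp
  also have "(\<Sum>f\<in>?F K. ?pulled f * \<phi> K (unit_vec (?F K) f))
      = (\<Sum>f\<in>{f \<in> ?F K. restrict f L = g}. \<phi> K (unit_vec (?F K) f))"
    unfolding sum.inter_filter[OF finite_final_fam[OF finA]]
    using restrict_final_fam[OF LK, of _ ar X A k] g by (intro sum.cong refl) (simp add: unit_vec_def)
  finally show ?thesis by simp
qed

text \<open>The solution is read off as \<open>x\<^sub>K\<^sub>,\<^sub>f = h(K; indicator of f)\<close>.  For \<open>n = 1\<close> the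
  indicators are not elements of \<open>G\<close>, but then every equation holds trivially.\<close>

lemma homto_kappa_imp_affine_accepts:
  assumes finA: "finite_struc A"
    and "homto (gsig n) gar (kappa ar X A k gar (Gtempl n)) (Gtempl n)"
  shows "affine_accepts n k ar A X"
proof (cases "n = 1")
  case True
  then show ?thesis
    unfolding affine_accepts_def by (intro exI[of _ "\<lambda>_ _. 0"]) (simp add: gcar_def)
next
  case n: False
  let ?F = "final_fam ar X A k"
  let ?E = "keq ar X A k (Gtempl n)"
  obtain h where h: "is_hom (gsig n) gar (kappa ar X A k gar (Gtempl n)) (Gtempl n) h"
    using assms(2) unfolding homto_def ..
  define \<phi> where "\<phi> K b = h () (?E `` {(K, (), b)})" for K b
  define x where "x K f = \<phi> K (unit_vec (?F K) f)" for K f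
  have "affine_solution n k ar A X x"
    unfolding affine_solution_def
  proof (intro conjI ballI allI impI)
    fix K f assume "K \<in> subsets_k X k"
    then show "x K f \<in> gcar n"
      unfolding x_def \<phi>_def using kappa_hom_in_gcar[OF h _ unit_vec_in_gcar[OF n]] by blast
  next
    fix K assume K: "K \<in> subsets_k X k"
    have "1 mod int n = \<phi> K (restrict (\<lambda>_. 1) (?F K)) mod int n"
      unfolding \<phi>_def using kappa_hom_const[OF h K one_in_gcar[OF n]] by simp
    also have "\<dots> = (\<Sum>f\<in>?F K. x K f) mod int n"
      using mod_additive.linear[OF kappa_hom_mod_additive[OF finA h K], of "restrict (\<lambda>_. 1) (?F K)"]
        one_in_gcar[OF n]
      by (simp add: x_def \<phi>_def)
    finally show "(\<Sum>f\<in>?F K. x K f) mod int n = 1 mod int n" by simp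
  next
    fix K L g assume "K \<in> subsets_k X k" "L \<subset> K" "g \<in> ?F L"
    then show "(\<Sum>f\<in>{f \<in> ?F K. restrict f L = g}. x K f) mod int n = x L g mod int n"
      using kappa_hom_marginal[OF finA h n] unfolding x_def \<phi>_def by blast
  qed
  then show ?thesis by (auto simp: affine_accepts_iff_solution)
qed

theorem mainTheorem11:
  fixes ar :: "'r \<Rightarrow> 't list"
    and A :: "('t, 'r, 'a) struc"
    and A' :: "('t, 'r, 'b) struc"
    and n :: nat and k :: nat
  assumes "promise_template ar A A'"
    and "k \<ge> 1"
  shows "affine_solves n k ar A A' \<longleftrightarrow> kappa_is_reduction n k ar A A'"
proof -
  have finA: "finite_struc A" using assms(1) by (simp add: promise_template_def)
  have accepts_iff:
    "affine_accepts n k ar A X \<longleftrightarrow> homto (gsig n) gar (kappa ar X A k gar (Gtempl n)) (Gtempl n)"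
    for X :: "('t, 'r, nat) struc"
    using affine_solution_imp_homto_kappa[OF finA] homto_kappa_imp_affine_accepts[OF finA]
    by (auto simp: affine_accepts_iff_solution)
  have complete: "homto UNIV ar X A \<Longrightarrow> affine_accepts n k ar A X" for X :: "('t, 'r, nat) struc"
    unfolding homto_def affine_accepts_iff_solution using hom_imp_affine_solution[OF finA] by blast
  show ?thesis
    unfolding affine_solves_def kappa_is_reduction_def
    using accepts_iff complete by blast
qed

end
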